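(* Let $a_1,\dots,a_n\in\mathbb{D}$ be distinct, $n\ge 2$, with $B_l(z)=\prod_{j=1}^l\frac{z-a_j}{1-\bar a_jz}$ and $k_j(z)=\frac1{1-\bar a_jz}$. Let $A$ be a linear operator on $K^2_{B_n}$ with matrix representation $(b^{(n)}_{i,j})_{i,j=1,\dots,n}$ with respect to $\{k_1,\dots,k_n\}$, i.e. $Ak_j=\sum_{m=1}^n b^{(n)}_{m,j}k_m$. Let $P_{n-1}$ be the orthogonal projection of $K^2_{B_n}$ onto $K^2_{B_{n-1}}$. Then $A_{n-1}=P_{n-1}A|_{K^2_{B_{n-1}}}$ has matrix representation $(b^{(n-1)}_{i,j})_{i,j=1,\dots,n-1}$ with respect to $\{k_1,\dots,k_{n-1}\}$ given by $$b^{(n-1)}_{i,j}=b^{(n)}_{i,j}+\frac{\overline{B_{n-1}(a_n)}\,b^{(n)}_{n,j}}{\overline{B_{n-1}'(a_i)}(\bar a_n-\bar a_i)}.$$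
   Context: $K^2_\theta=H^2\ominus\theta H^2$ for inner $\theta$; $\{k_1,\dots,k_l\}$ is a basis of $K^2_{B_l}$ and $K^2_{B_{n-1}}\subset K^2_{B_n}$. *)

theory Defs
  imports "HOL-Analysis.Analysis"
begin

definition kern :: "(nat \<Rightarrow> complex) \<Rightarrow> nat \<Rightarrow> complex \<Rightarrow> complex" where
  "kern a j = (\<lambda>z. 1 / (1 - cnj (a j) * z))"

definition blaschke :: "(nat \<Rightarrow> complex) \<Rightarrow> nat \<Rightarrow> complex \<Rightarrow> complex" where
  "blaschke a l = (\<lambda>z. \<Prod>j=1..l. (z - a j) / (1 - cnj (a j) * z))"

definition taylor_coeff :: "(complex \<Rightarrow> complex) \<Rightarrow> nat \<Rightarrow> complex" where
  "taylor_coeff f m = (deriv ^^ m) f 0 / of_nat (fact m)"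

definition h2_inner :: "(complex \<Rightarrow> complex) \<Rightarrow> (complex \<Rightarrow> complex) \<Rightarrow> complex" where
  "h2_inner f g = (\<Sum>m. taylor_coeff f m * cnj (taylor_coeff g m))"

text \<open>Model space K^2_{B_l}, which (by the standing context) is the linear span of
  k_1, ..., k_l (a basis of it).\<close>
definition model_space :: "(nat \<Rightarrow> complex) \<Rightarrow> nat \<Rightarrow> (complex \<Rightarrow> complex) set" where
  "model_space a l = {f. \<exists>c::nat \<Rightarrow> complex. f = (\<lambda>z. \<Sum>j=1..l. c j * kern a j z)}"

definition orth_proj :: "(complex \<Rightarrow> complex) set \<Rightarrow> (complex \<Rightarrow> complex) \<Rightarrow> (complex \<Rightarrow> complex)" where
  "orth_proj S f = (THE g. g \<in> S \<and> (\<forall>h\<in>S. h2_inner (\<lambda>z. f z - g z) h = 0))"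

end

theory Submission
  imports Defs "HOL-Computational_Algebra.Polynomial"
begin

(* The projection onto K^2_{B_l} is interpolation at the nodes a_1, ..., a_l.  The Taylor
   coefficients of k_i are cnj (a i)^m, which gives the reproducing property <f, k_i> = f (a_i);
   so g = P_l f iff g lies in the span of k_1, ..., k_l and agrees with f at a_1, ..., a_l.
   Such a g is unique: a combination of k_1, ..., k_l vanishing at the nodes has norm zero, so
   its coefficients solve a Vandermonde system with distinct nodes cnj (a i).
   Since P_{n-1} fixes k_1, ..., k_{n-1}, it remains to interpolate k_n, and the coefficients of
   its interpolant are the partial-fraction coefficients of a rational function built from the
   numerator and denominator of B_{n-1}; these are the correction terms in b^(n-1). *)

lemma norm_mult_less_one:
  fixes p q :: "'a::real_normed_div_algebra"
  assumes "norm p < 1" "norm q < 1"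
  shows "norm (p * q) < 1"
  using assms mult_strict_mono'[of "norm p" 1 "norm q" 1] by (simp add: norm_mult)

lemma coeff_eq_0_if_power_sums_eq_0:
  fixes x d :: "'b \<Rightarrow> 'a::field"
  assumes J: "finite J" and inj: "inj_on x J" and sums0: "\<And>m. (\<Sum>i\<in>J. d i * x i ^ m) = 0"
    and k: "k \<in> J"
  shows "d k = 0"
proof -
  define p where "p = (\<Prod>j\<in>J-{k}. [:- x j, 1:])"
  have poly_p: "poly p w = (\<Prod>j\<in>J-{k}. w - x j)" for w
    unfolding p_def by (simp add: poly_prod)
  have "(\<Sum>i\<in>J. d i * poly p (x i)) = (\<Sum>e\<le>degree p. coeff p e * (\<Sum>i\<in>J. d i * x i ^ e))"
    by (simp add: poly_altdef sum_distrib_left sum.swap[of _ J] mult_ac)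
  also have "\<dots> = 0" using sums0 by simp
  also have "(\<Sum>i\<in>J. d i * poly p (x i)) = d k * poly p (x k)"
    using J k by (subst sum.remove) (auto intro!: sum.neutral simp: poly_p, force)
  finally show ?thesis
    using J inj k by (auto simp: poly_p inj_on_def)
qed

lemma lagrange_interpolation:
  fixes x :: "'b \<Rightarrow> 'a::field" and q :: "'a poly"
  assumes J: "finite J" and inj: "inj_on x J" and deg: "degree q < card J"
  shows "poly q y = (\<Sum>i\<in>J. poly q (x i) * (\<Prod>j\<in>J-{i}. (y - x j) / (x i - x j)))"
proof -
  define L where "L = (\<Sum>i\<in>J. smult (poly q (x i) / (\<Prod>j\<in>J-{i}. x i - x j))
                                   (\<Prod>j\<in>J-{i}. [:- x j, 1:]))"
  have poly_L: "poly L w = (\<Sum>i\<in>J. poly q (x i) * (\<Prod>j\<in>J-{i}. (w - x j) / (x i - x j)))" for w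
    unfolding L_def by (simp add: poly_sum poly_prod prod_dividef)
  have "degree (\<Prod>j\<in>J-{i}. [:- x j, 1:]) \<le> card J - 1" if "i \<in> J" for i
    using degree_prod_sum_le[of "J - {i}" "\<lambda>j. [:- x j, 1:]"] J that by simp
  then have "degree L \<le> card J - 1"
    unfolding L_def by (intro degree_sum_le J) (auto intro: order_trans[OF degree_smult_le])
  then have deg_L: "degree L < card J"
    using deg by linarith
  have "poly L (x k) = poly q (x k)" if k: "k \<in> J" for k
  proof -
    have "poly L (x k) = poly q (x k) * (\<Prod>j\<in>J-{k}. (x k - x j) / (x k - x j))"
    proof -
      have "(\<Prod>j\<in>J-{i}. (x k - x j) / (x i - x j)) = 0" if "i \<in> J - {k}" for i
        using J k that by (intro prod_zero bexI[of _ k]) auto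
      then have "(\<Sum>i\<in>J-{k}. poly q (x i) * (\<Prod>j\<in>J-{i}. (x k - x j) / (x i - x j))) = 0"
        by (intro sum.neutral) auto
      then show ?thesis
        unfolding poly_L using J k by (simp add: sum.remove del: prod_zero_iff)
    qed
    also have "(\<Prod>j\<in>J-{k}. (x k - x j) / (x k - x j)) = 1"
      using k inj by (intro prod.neutral) (auto simp: inj_on_def)
    finally show ?thesis by simp
  qed
  then have "L = q"
    using J inj deg deg_L by (intro poly_eqI_degree[of "x ` J"]) (auto simp: card_image)
  then show ?thesis
    using poly_L[of y] by simp
qed

lemma partial_fraction_expansion:
  fixes x :: "'b \<Rightarrow> 'a::field" and q :: "'a poly"
  assumes J: "finite J" and inj: "inj_on x J" and y: "y \<notin> x ` J" and deg: "degree q < card J"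
  shows "poly q y / (\<Prod>j\<in>J. y - x j) =
    (\<Sum>i\<in>J. poly q (x i) / ((\<Prod>j\<in>J-{i}. x i - x j) * (y - x i)))"
proof -
  have "poly q (x i) * (\<Prod>j\<in>J-{i}. (y - x j) / (x i - x j)) / (\<Prod>j\<in>J. y - x j) =
      poly q (x i) / ((\<Prod>j\<in>J-{i}. x i - x j) * (y - x i))" if i: "i \<in> J" for i
  proof -
    have "(\<Prod>j\<in>J. y - x j) = (y - x i) * (\<Prod>j\<in>J-{i}. y - x j)"
      using J i by (simp add: prod.remove)
    moreover have "(\<Prod>j\<in>J-{i}. y - x j) \<noteq> 0" "y - x i \<noteq> 0"
      using J y i by auto
    ultimately show ?thesis
      by (simp add: prod_dividef)
  qed
  then show ?thesis
    by (subst lagrange_interpolation[OF J inj deg]) (simp add: sum_divide_distrib)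
qed

abbreviation kern_comb :: "(nat \<Rightarrow> complex) \<Rightarrow> nat set \<Rightarrow> (nat \<Rightarrow> complex) \<Rightarrow> complex \<Rightarrow> complex" where
  "kern_comb a I c \<equiv> \<lambda>z. \<Sum>i\<in>I. c i * kern a i z"

lemma kern_comb_diff:
  assumes "finite I" "finite L"
  shows "(\<lambda>z. kern_comb a I c z - kern_comb a L d z) =
    kern_comb a (I \<union> L) (\<lambda>i. (if i \<in> I then c i else 0) - (if i \<in> L then d i else 0))"
proof
  fix z
  have extend: "(\<Sum>i\<in>I \<union> L. (if i \<in> M then e i else 0) * kern a i z) = kern_comb a M e z"
    if "M \<subseteq> I \<union> L" for M e
    using assms that by (intro sum.mono_neutral_cong_right) auto
  show "kern_comb a I c z - kern_comb a L d z =
    kern_comb a (I \<union> L) (\<lambda>i. (if i \<in> I then c i else 0) - (if i \<in> L then d i else 0)) z"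
    by (simp add: left_diff_distrib sum_subtractf extend)
qed

lemma has_field_derivative_inverse_power:
  fixes c z k :: complex
  assumes "c * z \<noteq> 1"
  shows "((\<lambda>w. k / (1 - c * w) ^ Suc m) has_field_derivative
          k * of_nat (Suc m) * c / (1 - c * z) ^ Suc (Suc m)) (at z)"
proof -
  have "1 - c * z \<noteq> 0" using assms by auto
  show ?thesis
    by (rule derivative_eq_intros refl)+ (use \<open>1 - c * z \<noteq> 0\<close> in \<open>simp_all add: divide_simps\<close>)
qed

lemma higher_deriv_kern_comb:
  assumes "finite I" and "\<forall>i\<in>I. cnj (a i) * z \<noteq> 1"
  shows "(deriv ^^ m) (kern_comb a I c) z =
    (\<Sum>i\<in>I. c i * fact m * cnj (a i) ^ m / (1 - cnj (a i) * z) ^ Suc m)"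
  using assms(2)
proof (induction m arbitrary: z)
  case 0
  then show ?case by (simp add: kern_def)
next
  case (Suc m)
  define U where "U = (\<Inter>i\<in>I. {w. cnj (a i) * w \<noteq> 1})"
  have "open U"
    unfolding U_def using assms(1) by (intro open_INT ballI open_Collect_neq continuous_intros) auto
  have "((\<lambda>w. \<Sum>i\<in>I. c i * fact m * cnj (a i) ^ m / (1 - cnj (a i) * w) ^ Suc m)
      has_field_derivative (\<Sum>i\<in>I. c i * fact m * cnj (a i) ^ m * of_nat (Suc m) * cnj (a i) /
        (1 - cnj (a i) * z) ^ Suc (Suc m))) (at z)"
    using Suc.prems by (intro DERIV_sum has_field_derivative_inverse_power) auto
  also have "(\<Sum>i\<in>I. c i * fact m * cnj (a i) ^ m * of_nat (Suc m) * cnj (a i) /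
        (1 - cnj (a i) * z) ^ Suc (Suc m)) =
      (\<Sum>i\<in>I. c i * fact (Suc m) * cnj (a i) ^ Suc m / (1 - cnj (a i) * z) ^ Suc (Suc m))"
    by (simp add: mult_ac)
  finally have "((deriv ^^ m) (kern_comb a I c) has_field_derivative
      (\<Sum>i\<in>I. c i * fact (Suc m) * cnj (a i) ^ Suc m / (1 - cnj (a i) * z) ^ Suc (Suc m))) (at z)"
    by (rule has_field_derivative_transform_within_open[OF _ \<open>open U\<close>]) (use Suc in \<open>auto simp: U_def\<close>)
  then show ?case by (simp add: DERIV_imp_deriv)
qed

lemma taylor_coeff_kern_comb:
  assumes "finite I"
  shows "taylor_coeff (kern_comb a I c) m = (\<Sum>i\<in>I. c i * cnj (a i) ^ m)"
  using higher_deriv_kern_comb[OF assms, where z = 0 and m = m and c = c]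
  by (simp add: taylor_coeff_def sum_divide_distrib)

lemma kern_comb_inner_sums:
  assumes "finite I" "finite L" and disc: "\<forall>i\<in>I \<union> L. norm (a i) < 1"
  shows "(\<lambda>m. taylor_coeff (kern_comb a I c) m * cnj (taylor_coeff (kern_comb a L d) m))
    sums (\<Sum>l\<in>L. cnj (d l) * kern_comb a I c (a l))"
proof -
  have "(\<lambda>m. \<Sum>l\<in>L. \<Sum>i\<in>I. cnj (d l) * c i * (cnj (a i) * a l) ^ m)
      sums (\<Sum>l\<in>L. \<Sum>i\<in>I. cnj (d l) * c i * kern a i (a l))"
  proof (intro sums_sum)
    fix i l assume "i \<in> I" "l \<in> L"
    then have "norm (cnj (a i) * a l) < 1"
      using disc by (intro norm_mult_less_one) auto
    from sums_mult[OF geometric_sums[OF this], of "cnj (d l) * c i"]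
    show "(\<lambda>m. cnj (d l) * c i * (cnj (a i) * a l) ^ m) sums (cnj (d l) * c i * kern a i (a l))"
      by (simp add: kern_def)
  qed
  moreover have "taylor_coeff (kern_comb a I c) m * cnj (taylor_coeff (kern_comb a L d) m) =
      (\<Sum>l\<in>L. \<Sum>i\<in>I. cnj (d l) * c i * (cnj (a i) * a l) ^ m)" for m
    by (simp add: taylor_coeff_kern_comb assms sum_product power_mult_distrib mult_ac sum.swap[of _ I])
  ultimately show ?thesis
    by (simp add: sum_distrib_left mult.assoc)
qed

lemma h2_inner_kern_comb:
  assumes "finite I" "finite L" "\<forall>i\<in>I \<union> L. norm (a i) < 1"
  shows "h2_inner (kern_comb a I c) (kern_comb a L d) = (\<Sum>l\<in>L. cnj (d l) * kern_comb a I c (a l))"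
  unfolding h2_inner_def using kern_comb_inner_sums[OF assms] by (rule sums_unique[symmetric])

lemma kern_comb_coeff_eq_0_if_vanishes_at_nodes:
  assumes I: "finite I" and inj: "inj_on a I" and disc: "\<forall>i\<in>I. norm (a i) < 1"
    and vanish: "\<forall>l\<in>I. kern_comb a I c (a l) = 0" and k: "k \<in> I"
  shows "c k = 0"
proof -
  \<comment> \<open>The norm of the combination is zero, so all its Taylor coefficients vanish.\<close>
  define t where "t m = taylor_coeff (kern_comb a I c) m" for m
  have "(\<lambda>m. t m * cnj (t m)) sums 0"
    using kern_comb_inner_sums[OF I I, of a c c] disc vanish by (simp add: t_def)
  then have "(\<lambda>m. complex_of_real ((norm (t m))\<^sup>2)) sums complex_of_real 0"
    by (simp only: complex_norm_square of_real_0)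
  then have "(\<lambda>m. (norm (t m))\<^sup>2) sums 0"
    by (simp only: sums_of_real_iff)
  then have "\<forall>m. t m = 0"
    using suminf_eq_zero_iff[of "\<lambda>m. (norm (t m))\<^sup>2"] by (simp add: sums_iff)
  then have "(\<Sum>i\<in>I. c i * cnj (a i) ^ m) = 0" for m
    by (simp add: t_def taylor_coeff_kern_comb[OF I])
  moreover have "inj_on (\<lambda>i. cnj (a i)) I"
    using inj by (simp add: inj_on_def)
  ultimately show ?thesis
    by (rule coeff_eq_0_if_power_sums_eq_0[OF I _ _ k, rotated])
qed

lemma model_space_eq_range: "model_space a l = range (kern_comb a {1..l})"
  unfolding model_space_def by auto

lemma orthogonal_model_space_iff:
  assumes "finite I" and disc: "\<forall>i\<in>I \<union> {1..l}. norm (a i) < 1"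
    and f: "f = kern_comb a I c"
  shows "(\<forall>h\<in>model_space a l. h2_inner f h = 0) \<longleftrightarrow> (\<forall>i\<in>{1..l}. f (a i) = 0)"
proof -
  have inner: "h2_inner (kern_comb a I c) (kern_comb a {1..l} d) =
      (\<Sum>j=1..l. cnj (d j) * kern_comb a I c (a j))" for d
    using assms by (intro h2_inner_kern_comb) auto
  show ?thesis
    unfolding f
  proof
    assume orth: "\<forall>h\<in>model_space a l. h2_inner (kern_comb a I c) h = 0"
    show "\<forall>i\<in>{1..l}. kern_comb a I c (a i) = 0"
    proof
      fix i assume i: "i \<in> {1..l}"
      have "0 = h2_inner (kern_comb a I c) (kern_comb a {1..l} (\<lambda>j. if j = i then 1 else 0))"
        using orth by (auto simp: model_space_eq_range)
      also have "\<dots> = (\<Sum>j=1..l. cnj (if j = i then 1 else 0) * kern_comb a I c (a j))"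
        by (rule inner)
      also have "\<dots> = kern_comb a I c (a i)"
        using i by (simp add: if_distrib[of cnj] if_distrib[of "\<lambda>x. x * _"] cong: if_cong)
      finally show "kern_comb a I c (a i) = 0" ..
    qed
  next
    assume vanish: "\<forall>i\<in>{1..l}. kern_comb a I c (a i) = 0"
    show "\<forall>h\<in>model_space a l. h2_inner (kern_comb a I c) h = 0"
    proof
      fix h assume "h \<in> model_space a l"
      then obtain d where "h = kern_comb a {1..l} d"
        by (auto simp: model_space_eq_range)
      then show "h2_inner (kern_comb a I c) h = 0"
        using vanish by (simp only: inner) simp
    qed
  qed
qed

lemma model_space_eq_if_eq_at_nodes:
  assumes inj: "inj_on a {1..l}" and disc: "\<forall>i\<in>{1..l}. norm (a i) < 1"
    and g: "g \<in> model_space a l" and h: "h \<in> model_space a l"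
    and agree: "\<forall>i\<in>{1..l}. g (a i) = h (a i)"
  shows "g = h"
proof -
  obtain c d where gc: "g = kern_comb a {1..l} c" and hd: "h = kern_comb a {1..l} d"
    using g h unfolding model_space_eq_range by blast
  have "\<forall>j\<in>{1..l}. kern_comb a {1..l} (\<lambda>i. c i - d i) (a j) = 0"
    using agree unfolding gc hd by (simp add: left_diff_distrib sum_subtractf)
  then have "c i - d i = 0" if "i \<in> {1..l}" for i
    by (intro kern_comb_coeff_eq_0_if_vanishes_at_nodes[OF _ inj disc _ that]) simp_all
  then show ?thesis
    unfolding gc hd by (intro ext sum.cong) auto
qed

lemma orth_proj_model_space_eqI:
  assumes I: "finite I" and disc: "\<forall>i\<in>I \<union> {1..l}. norm (a i) < 1" and inj: "inj_on a {1..l}"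
    and g: "g \<in> model_space a l" and interp: "\<forall>i\<in>{1..l}. g (a i) = kern_comb a I c (a i)"
  shows "orth_proj (model_space a l) (kern_comb a I c) = g"
proof -
  have residual_orthogonal_iff:
    "(\<forall>h\<in>model_space a l. h2_inner (\<lambda>z. kern_comb a I c z - g' z) h = 0) \<longleftrightarrow>
      (\<forall>i\<in>{1..l}. g' (a i) = kern_comb a I c (a i))"
    if "g' \<in> model_space a l" for g'
  proof -
    from \<open>g' \<in> model_space a l\<close> obtain d where g': "g' = kern_comb a {1..l} d"
      unfolding model_space_eq_range by blast
    define e where "e i = (if i \<in> I then c i else 0) - (if i \<in> {1..l} then d i else 0)" for i
    have diff: "(\<lambda>z. kern_comb a I c z - g' z) = kern_comb a (I \<union> {1..l}) e"
      unfolding g' e_def using I by (simp add: kern_comb_diff)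
    have "(\<forall>h\<in>model_space a l. h2_inner (\<lambda>z. kern_comb a I c z - g' z) h = 0) \<longleftrightarrow>
        (\<forall>i\<in>{1..l}. kern_comb a I c (a i) - g' (a i) = 0)"
      using I disc by (intro orthogonal_model_space_iff[OF _ _ diff]) auto
    then show ?thesis
      by auto
  qed
  show ?thesis
    unfolding orth_proj_def
  proof (rule the_equality)
    show "g \<in> model_space a l \<and>
        (\<forall>h\<in>model_space a l. h2_inner (\<lambda>z. kern_comb a I c z - g z) h = 0)"
      using residual_orthogonal_iff[OF g] g interp by blast
  next
    fix g' assume g': "g' \<in> model_space a l \<and>
        (\<forall>h\<in>model_space a l. h2_inner (\<lambda>z. kern_comb a I c z - g' z) h = 0)"
    then have "\<forall>i\<in>{1..l}. g' (a i) = g (a i)"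
      using residual_orthogonal_iff interp by auto
    then show "g' = g"
      using model_space_eq_if_eq_at_nodes[OF inj _ _ g] disc g' by auto
  qed
qed

lemma deriv_blaschke_prod_at_zero:
  fixes a :: "nat \<Rightarrow> complex"
  assumes J: "finite J" and i: "i \<in> J" and no_pole: "\<forall>j\<in>J. cnj (a j) * a i \<noteq> 1"
  shows "deriv (\<lambda>z. \<Prod>j\<in>J. (z - a j) / (1 - cnj (a j) * z)) (a i) =
    1 / (1 - cnj (a i) * a i) * (\<Prod>j\<in>J-{i}. (a i - a j) / (1 - cnj (a j) * a i))"
proof -
  define f' where "f' j = (1 - cnj (a j) * a j) / (1 - cnj (a j) * a i)\<^sup>2" for j
  have "((\<lambda>z. (z - a j) / (1 - cnj (a j) * z)) has_field_derivative f' j) (at (a i))"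
    if "j \<in> J" for j
  proof -
    have "1 - cnj (a j) * a i \<noteq> 0"
      using no_pole that by auto
    then show ?thesis
      unfolding f'_def by (auto intro!: derivative_eq_intros simp: field_simps power2_eq_square)
  qed
  then have "((\<lambda>z. \<Prod>j\<in>J. (z - a j) / (1 - cnj (a j) * z)) has_field_derivative
      (\<Sum>j\<in>J. f' j * (\<Prod>k\<in>J-{j}. (a i - a k) / (1 - cnj (a k) * a i)))) (at (a i))"
    by (rule has_field_derivative_prod)
  moreover have "(\<Prod>k\<in>J-{j}. (a i - a k) / (1 - cnj (a k) * a i)) = 0" if "j \<in> J - {i}" for j
    using J i that by (intro prod_zero bexI[of _ i]) auto
  then have "(\<Sum>j\<in>J. f' j * (\<Prod>k\<in>J-{j}. (a i - a k) / (1 - cnj (a k) * a i))) =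
      f' i * (\<Prod>k\<in>J-{i}. (a i - a k) / (1 - cnj (a k) * a i))"
    using J i by (subst sum.remove) (auto intro!: sum.neutral simp del: prod_zero_iff)
  moreover have "f' i = 1 / (1 - cnj (a i) * a i)"
    using no_pole i by (auto simp: f'_def power2_eq_square)
  ultimately show ?thesis
    by (simp add: DERIV_imp_deriv)
qed

lemma kern_comb_interpolates_kern:
  fixes a :: "nat \<Rightarrow> complex" and J :: "nat set"
  defines "B \<equiv> \<lambda>z. \<Prod>j\<in>J. (z - a j) / (1 - cnj (a j) * z)"
  assumes J: "finite J" and p: "p \<notin> J" and inj: "inj_on a (insert p J)"
    and disc: "\<forall>i\<in>insert p J. norm (a i) < 1" and l: "l \<in> J"
  shows "(\<Sum>i\<in>J. cnj (B (a p)) / (cnj (deriv B (a i)) * (cnj (a p) - cnj (a i))) * kern a i (a l))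
    = kern a p (a l)"
proof -
  \<comment> \<open>With x i = cnj (a i) and y = cnj (a p), cnj (B (a p)) = N / D y and
    cnj (B' (a i)) = (\<Prod>j\<in>J-{i}. x i - x j) / D (x i); as D = (1 - a l * w) * q, the claim is
    the partial-fraction expansion of q / N at y, scaled by N / D y.\<close>
  define x where "x i = cnj (a i)" for i
  define y where "y = cnj (a p)"
  define D where "D w = (\<Prod>j\<in>J. 1 - a j * w)" for w
  define N where "N = (\<Prod>j\<in>J. y - x j)"
  define q where "q = (\<Prod>j\<in>J-{l}. [:1, - a j:])"
  have no_pole: "a j * x i \<noteq> 1" if "i \<in> insert p J" "j \<in> insert p J" for i j
    using norm_mult_less_one[of "a j" "x i"] disc that by (auto simp: x_def)
  have D_nonzero: "D (x i) \<noteq> 0" if "i \<in> insert p J" for i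
    unfolding D_def using J no_pole that by auto
  have D_y_nonzero: "D y \<noteq> 0"
    using D_nonzero[of p] by (simp add: x_def y_def)
  have poly_q: "poly q w = (\<Prod>j\<in>J-{l}. 1 - a j * w)" for w
    unfolding q_def by (simp add: poly_prod mult_ac)
  have D_q: "D w = (1 - a l * w) * poly q w" for w
    unfolding D_def poly_q using J l by (simp add: prod.remove)
  have "degree q \<le> sum (degree \<circ> (\<lambda>j. [:1, - a j:])) (J - {l})"
    unfolding q_def using J by (intro degree_prod_sum_le) simp
  also have "\<dots> \<le> card (J - {l})"
    using sum_mono[of "J - {l}" "degree \<circ> (\<lambda>j. [:1, - a j:])" "\<lambda>_. 1"] by simp
  finally have deg_q: "degree q < card J"
    using J l by (metis card_Diff1_less le_less_trans)
  have inj_x: "inj_on x J"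
    using inj by (auto simp: x_def inj_on_def)
  have y_notin: "y \<notin> x ` J"
    using inj p by (auto simp: x_def y_def inj_on_def)
  have N_nonzero: "N \<noteq> 0"
    unfolding N_def using J y_notin by auto
  have B_p: "cnj (B (a p)) = N / D y"
    by (simp add: B_def N_def D_def x_def y_def prod_dividef mult.commute)
  have B'_i: "cnj (deriv B (a i)) = (\<Prod>j\<in>J-{i}. x i - x j) / D (x i)" if i: "i \<in> J" for i
  proof -
    have "deriv B (a i) =
        1 / (1 - cnj (a i) * a i) * (\<Prod>j\<in>J-{i}. (a i - a j) / (1 - cnj (a j) * a i))"
      unfolding B_def using J i norm_mult_less_one[of "cnj (a _)" "a i"] disc
      by (intro deriv_blaschke_prod_at_zero) fastforce+
    moreover have "D (x i) = (1 - a i * x i) * (\<Prod>j\<in>J-{i}. 1 - a j * x i)"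
      unfolding D_def using J i by (simp add: prod.remove)
    ultimately show ?thesis
      by (simp add: x_def prod_dividef mult.commute)
  qed
  have "cnj (B (a p)) / (cnj (deriv B (a i)) * (y - x i)) * kern a i (a l) =
      N / D y * (poly q (x i) / ((\<Prod>j\<in>J-{i}. x i - x j) * (y - x i)))" if i: "i \<in> J" for i
  proof -
    have "(\<Prod>j\<in>J-{i}. x i - x j) \<noteq> 0"
      using J inj_x i by (auto simp: inj_on_def)
    moreover have "y - x i \<noteq> 0" "1 - a l * x i \<noteq> 0" "poly q (x i) \<noteq> 0"
      using y_notin i D_nonzero[of i] D_q[of "x i"] by auto
    moreover have kern_i: "kern a i (a l) = 1 / (1 - a l * x i)"
      by (simp add: kern_def x_def mult.commute)
    moreover have "n / d / (m / (v * r) * e) * (1 / v) = n / d * (r / (m * e))"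
      if "d \<noteq> 0" "m \<noteq> 0" "e \<noteq> 0" "v \<noteq> 0" "r \<noteq> 0" for n d m e v r :: complex
      using that by (simp add: field_simps)
    ultimately show ?thesis
      unfolding B_p B'_i[OF i] D_q[of "x i"] using D_y_nonzero by simp
  qed
  then have "(\<Sum>i\<in>J. cnj (B (a p)) / (cnj (deriv B (a i)) * (y - x i)) * kern a i (a l)) =
      N / D y * (poly q y / N)"
    by (simp add: sum_distrib_left N_def partial_fraction_expansion[OF J inj_x y_notin deg_q])
  also have "\<dots> = kern a p (a l)"
    using N_nonzero D_q[of y] D_y_nonzero by (simp add: kern_def y_def mult.commute)
  finally show ?thesis
    by (simp add: x_def y_def)
qed

lemma orth_proj_model_space_pred_kern_comb:
  assumes n: "n \<ge> 1" and disc: "\<forall>i\<in>{1..n}. norm (a i) < 1" and dist: "inj_on a {1..n}"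
  shows "orth_proj (model_space a (n-1)) (kern_comb a {1..n} e) =
    kern_comb a {1..n-1} (\<lambda>i. e i + cnj (blaschke a (n-1) (a n)) * e n /
      (cnj (deriv (blaschke a (n-1)) (a i)) * (cnj (a n) - cnj (a i))))"
proof -
  define c where "c i = cnj (blaschke a (n-1) (a n)) /
    (cnj (deriv (blaschke a (n-1)) (a i)) * (cnj (a n) - cnj (a i)))" for i
  have nodes: "{1..n} = insert n {1..n-1}" "n \<notin> {1..n-1}"
    using n by auto
  have inj_n: "inj_on a (insert n {1..n-1})" and disc_n: "\<forall>i\<in>insert n {1..n-1}. norm (a i) < 1"
    using dist disc unfolding nodes(1)[symmetric] by auto
  have interp: "kern_comb a {1..n-1} c (a l) = kern a n (a l)" if "l \<in> {1..n-1}" for l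
    using kern_comb_interpolates_kern[OF _ nodes(2) inj_n disc_n that]
    unfolding c_def blaschke_def by simp
  have "orth_proj (model_space a (n-1)) (kern_comb a {1..n} e) =
      kern_comb a {1..n-1} (\<lambda>i. e i + c i * e n)"
  proof (rule orth_proj_model_space_eqI)
    show "kern_comb a {1..n-1} (\<lambda>i. e i + c i * e n) \<in> model_space a (n-1)"
      unfolding model_space_eq_range by (rule rangeI)
    show "\<forall>l\<in>{1..n-1}. kern_comb a {1..n-1} (\<lambda>i. e i + c i * e n) (a l) =
        kern_comb a {1..n} e (a l)"
    proof
      fix l assume l: "l \<in> {1..n-1}"
      have "kern_comb a {1..n-1} (\<lambda>i. e i + c i * e n) (a l) =
          kern_comb a {1..n-1} e (a l) + e n * kern_comb a {1..n-1} c (a l)"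
        by (simp add: algebra_simps sum.distrib sum_distrib_left)
      also have "\<dots> = kern_comb a {1..n} e (a l)"
        unfolding interp[OF l] nodes(1) using nodes(2) by simp
      finally show "kern_comb a {1..n-1} (\<lambda>i. e i + c i * e n) (a l) = kern_comb a {1..n} e (a l)" .
    qed
  qed (use disc dist nodes in \<open>auto intro: inj_on_subset\<close>)
  then show ?thesis
    by (simp add: c_def)
qed

theorem lemma4p5:
  fixes a :: "nat \<Rightarrow> complex" and n :: nat
    and A :: "(complex \<Rightarrow> complex) \<Rightarrow> (complex \<Rightarrow> complex)"
    and b :: "nat \<Rightarrow> nat \<Rightarrow> complex"
  assumes n2: "n \<ge> 2"
    and disc: "\<And>j. j \<in> {1..n} \<Longrightarrow> norm (a j) < 1"
    and dist: "inj_on a {1..n}"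
    and A_lin: "\<And>f g c. f \<in> model_space a n \<Longrightarrow> g \<in> model_space a n \<Longrightarrow>
                  A (\<lambda>z. f z + c * g z) = (\<lambda>z. A f z + c * A g z)"
    and A_mat: "\<And>j. j \<in> {1..n} \<Longrightarrow>
                  A (kern a j) = (\<lambda>z. \<Sum>m=1..n. b m j * kern a m z)"
  shows "\<forall>j\<in>{1..n-1}.
           orth_proj (model_space a (n-1)) (A (kern a j)) =
           (\<lambda>z. \<Sum>i=1..n-1.
                 (b i j + cnj (blaschke a (n-1) (a n)) * b n j /
                   (cnj (deriv (blaschke a (n-1)) (a i)) * (cnj (a n) - cnj (a i))))
                 * kern a i z)"
proof
  fix j assume "j \<in> {1..n-1}"
  then have "A (kern a j) = kern_comb a {1..n} (\<lambda>m. b m j)"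
    by (intro A_mat) auto
  then show "orth_proj (model_space a (n-1)) (A (kern a j)) =
      (\<lambda>z. \<Sum>i=1..n-1.
         (b i j + cnj (blaschke a (n-1) (a n)) * b n j /
           (cnj (deriv (blaschke a (n-1)) (a i)) * (cnj (a n) - cnj (a i)))) * kern a i z)"
    using orth_proj_model_space_pred_kern_comb[of n a "\<lambda>m. b m j"] n2 disc dist by simp
qed

end
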